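(* Let $R$ be a ring and $u\in R$. Suppose that $m:=\mathrm{char}(R)$ is finite and $J(R)$ is a nil ideal of index $s+1$, where $s\geq 0$. If $u^t-1\in J(R)$ for some $t\in\mathbb{N}$, then $u^{tm^s}=1$.
   Context: All rings are associative with identity; $\mathrm{char}(R):=|1\cdot\mathbb{Z}|$. A nil ideal $I$ is nil of index $k$ if $r^k=0$ for all $r\in I$ and $k$ is the minimal natural number with this property. *)

theory Defs
  imports Main
begin

definition left_ideal :: "'a::ring_1 set \<Rightarrow> bool" where
  "left_ideal I \<longleftrightarrow> 0 \<in> I \<and> (\<forall>x\<in>I. \<forall>y\<in>I. x + y \<in> I) \<and> (\<forall>x\<in>I. - x \<in> I)
     \<and> (\<forall>r. \<forall>x\<in>I. r * x \<in> I)"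

definition maximal_left_ideal :: "'a::ring_1 set \<Rightarrow> bool" where
  "maximal_left_ideal I \<longleftrightarrow> left_ideal I \<and> I \<noteq> UNIV \<and>
     (\<forall>K. left_ideal K \<and> I \<subseteq> K \<and> K \<noteq> UNIV \<longrightarrow> K = I)"

definition jacobson :: "'a::ring_1 set" where
  "jacobson = \<Inter> {I. maximal_left_ideal I}"

definition ring_char :: "'a::ring_1 itself \<Rightarrow> nat" where
  "ring_char _ = card (range (of_int :: int \<Rightarrow> 'a))"

definition nil_of_index :: "'a::ring_1 set \<Rightarrow> nat \<Rightarrow> bool" where
  "nil_of_index I k \<longleftrightarrow> (\<forall>r\<in>I. r ^ k = 0) \<and> (\<forall>j. (\<forall>r\<in>I. r ^ j = 0) \<longrightarrow> k \<le> j)"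

end

(* Writing m = char R and j = u^t - 1, we have u^(t m^s) = (1 + j)^(m^s), which expands
   binomially since 1 and j commute. The terms with k > s vanish because j^(s+1) = 0, and for
   0 < k <= s the coefficient C(m^s, k) is a multiple of m, hence zero in R. *)
theory Submission
  imports Defs "HOL-Number_Theory.Cong"
begin

lemma ring_char_eq_CHAR:
  assumes "finite (range (of_int :: int \<Rightarrow> 'a::ring_1))"
  shows "ring_char TYPE('a) = CHAR('a)"
proof -
  obtain x y :: int where "x \<noteq> y" "(of_int x :: 'a) = of_int y"
    using assms finite_imageD[of of_int UNIV] infinite_UNIV_int unfolding inj_def by blast
  hence "int CHAR('a) dvd x - y" by (simp add: of_int_eq_iff_cong_CHAR cong_iff_dvd_diff)
  with \<open>x \<noteq> y\<close> have pos: "CHAR('a) > 0" by (auto intro: gr0I)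
  have "range (of_int :: int \<Rightarrow> 'a) = of_nat ` {..<CHAR('a)}"
  proof (intro equalityI subsetI)
    fix y :: 'a assume "y \<in> range of_int"
    then obtain z where "y = of_int z" by blast
    hence "y = of_nat (nat (z mod int CHAR('a)))"
      using pos by (simp add: of_int_eq_iff_cong_CHAR cong_def)
    moreover have "nat (z mod int CHAR('a)) < CHAR('a)" using pos by (simp add: nat_less_iff)
    ultimately show "y \<in> of_nat ` {..<CHAR('a)}" by blast
  qed (auto intro!: image_eqI[where x = "int _"])
  also have "card \<dots> = CHAR('a)"
    by (subst card_image) (auto intro!: inj_onI simp: of_nat_eq_iff_cong_CHAR cong_def)
  finally show ?thesis by (simp add: ring_char_def)
qed

lemma multiplicity_less_self:
  fixes p k :: nat assumes "prime p" "0 < k" shows "multiplicity p k < k"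
proof (rule multiplicity_lessI)
  have "k < 2 ^ k" by (rule less_exp)
  also have "\<dots> \<le> p ^ k" using prime_ge_2_nat[OF assms(1)] by (simp add: power_mono)
  finally show "\<not> p ^ k dvd k" using assms(2) by (auto dest: dvd_imp_le)
qed (use assms in auto)

lemma dvd_power_choose:
  fixes m s k :: nat assumes "0 < k" "k \<le> s"
  shows "m dvd (m ^ s choose k)"
proof (cases "m \<le> 1")
  case True
  then show ?thesis using assms by (auto simp: le_Suc_eq zero_power)
next
  case False
  define c where "c = m ^ s choose k"
  have "k < 2 ^ k" by (rule less_exp)
  also have "\<dots> \<le> 2 ^ s" using assms(2) by (simp add: power_increasing)
  also have "\<dots> \<le> m ^ s" using False by (simp add: power_mono)
  finally have "c \<noteq> 0" by (simp add: c_def)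
  \<comment> \<open>k c = m^s C(m^s - 1, k - 1), while each p-adic valuation of k is below k \<le> s\<close>
  have "m ^ s dvd k * c"
    using times_binomial_minus1_eq[OF assms(1), of "m ^ s"] by (simp add: c_def)
  show ?thesis unfolding c_def[symmetric]
  proof (rule multiplicity_le_imp_dvd)
    fix p :: nat assume p: "prime p"
    have "s * multiplicity p m = multiplicity p (m ^ s)"
      using p False by (simp add: prime_elem_multiplicity_power_distrib)
    also have "\<dots> \<le> multiplicity p (k * c)"
      using \<open>m ^ s dvd k * c\<close> assms(1) \<open>c \<noteq> 0\<close> by (simp add: dvd_imp_multiplicity_le)
    also have "\<dots> = multiplicity p k + multiplicity p c"
      using p assms(1) \<open>c \<noteq> 0\<close> by (simp add: prime_elem_multiplicity_mult_distrib)
    finally have "s * multiplicity p m \<le> multiplicity p k + multiplicity p c" .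
    moreover have "multiplicity p k < s"
      using multiplicity_less_self[OF p assms(1)] assms(2) by linarith
    moreover have "multiplicity p m + (s - 1) \<le> s * multiplicity p m"
      if "multiplicity p m > 0"
      using that assms by (cases s) (auto simp: mult_le_mono2[of 1, simplified])
    ultimately show "multiplicity p m \<le> multiplicity p c"
      by (cases "multiplicity p m = 0") auto
  qed (use False in auto)
qed

lemma one_plus_power_eq_sum:
  fixes x :: "'a::semiring_1"
  shows "(1 + x) ^ n = (\<Sum>k\<le>n. of_nat (n choose k) * x ^ k)"
proof (induction n)
  case (Suc n)
  have shift: "(\<Sum>k\<le>n. of_nat (n choose k) * x ^ k)
      = 1 + (\<Sum>k\<le>n. of_nat (n choose Suc k) * x ^ Suc k)"
  proof -
    have "(\<Sum>k\<le>n. of_nat (n choose k) * x ^ k) = (\<Sum>k\<le>Suc n. of_nat (n choose k) * x ^ k)"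
      by (simp add: binomial_eq_0)
    then show ?thesis by (simp only: sum.atMost_Suc_shift) simp
  qed
  have "(1 + x) ^ Suc n
      = (\<Sum>k\<le>n. of_nat (n choose k) * x ^ k) + (\<Sum>k\<le>n. of_nat (n choose k) * x ^ Suc k)"
    unfolding power_Suc2 Suc.IH by (simp add: distrib_left sum_distrib_right mult.assoc)
  also have "\<dots> = 1 + (\<Sum>k\<le>n. of_nat (Suc n choose Suc k) * x ^ Suc k)"
    by (simp add: shift sum.distrib distrib_right add_ac)
  also have "\<dots> = (\<Sum>k\<le>Suc n. of_nat (Suc n choose k) * x ^ k)"
    by (simp only: sum.atMost_Suc_shift) simp
  finally show ?case .
qed simp

lemma one_plus_nilpotent_power_eq_1:
  fixes x :: "'a::semiring_1"
  assumes "of_nat m = (0::'a)" and "x ^ (s + 1) = 0"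
  shows "(1 + x) ^ (m ^ s) = 1"
proof -
  have "of_nat (m ^ s choose k) * x ^ k = 0" if "0 < k" for k
  proof (cases "k \<le> s")
    case True
    with \<open>0 < k\<close> obtain q where "m ^ s choose k = m * q"
      using dvd_power_choose by (blast elim: dvdE)
    then show ?thesis using assms(1) by simp
  next
    case False
    then have "k = (s + 1) + (k - (s + 1))" by simp
    then have "x ^ k = x ^ (s + 1) * x ^ (k - (s + 1))"
      by (metis power_add)
    then show ?thesis using assms(2) by simp
  qed
  then have "(\<Sum>k\<le>m ^ s. of_nat (m ^ s choose k) * x ^ k)
      = (\<Sum>k\<le>m ^ s. if k = 0 then 1 else 0)"
    by (intro sum.cong) auto
  then show ?thesis by (simp add: one_plus_power_eq_sum)
qed

theorem lemma2p10:
  fixes u :: "'a::ring_1" and s t :: nat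
  assumes "finite (range (of_int :: int \<Rightarrow> 'a))"
    and "nil_of_index (jacobson :: 'a set) (s + 1)"
    and "u ^ t - 1 \<in> jacobson"
  shows "u ^ (t * ring_char TYPE('a) ^ s) = 1"
proof -
  have "of_nat (ring_char TYPE('a)) = (0::'a)"
    using ring_char_eq_CHAR[OF assms(1)] by simp
  moreover have "(u ^ t - 1) ^ (s + 1) = 0"
    using assms(2,3) unfolding nil_of_index_def by blast
  ultimately have "(1 + (u ^ t - 1)) ^ (ring_char TYPE('a) ^ s) = 1"
    by (rule one_plus_nilpotent_power_eq_1)
  then show ?thesis by (simp add: power_mult)
qed

end
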